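(* Let $1<p<\infty$ and let $\|x\|_p=\big(\sum_{i=1}^n|x_i|^p\big)^{1/p}$ on $\mathbb{R}^n$. Then $\|\cdot\|_p$ is geometrically convex in the tangent plane, doubling in the tangent plane, and balanced in the tangent plane.
   Context: For a norm $\|\cdot\|$ differentiable on $\mathbb{R}^n\setminus\{0\}$, $N(x)$ denotes its gradient at $x\ne0$, $\langle\cdot,\cdot\rangle$ the Euclidean inner product, and $h(x,y)=\|y\|-\langle y,N(x)\rangle$. The norm is: - geometrically convex in the tangent plane if there are $\Lambda>2$, $r>0$ with $h(x,x+2y)\ge\Lambda h(x,x+y)$ whenever $x\ne0$, $\|y\|\le r\|x\|$, $\langle y,N(x)\rangle=0$; - doubling in the tangent plane if there are $T,r>0$ with $h(x,x+2y)\le Th(x,x+y)$ whenever $x\ne0$, $\|y\|\le r\|x\|$, $\langle y,N(x)\rangle=0$; - balanced in the tangent plane if there are $r,K>0$ with $h(x,x+y)\le Kh(x,x-y)$ whenever $x\ne0$, $\|y\|\le r\|x\|$, $\langle y,N(x)\rangle=0$. *)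

theory Defs
  imports "HOL-Analysis.Analysis"
begin

definition pnorm :: "real \<Rightarrow> real^'n \<Rightarrow> real" where
  "pnorm p x = (\<Sum>i\<in>UNIV. \<bar>x $ i\<bar> powr p) powr (1 / p)"

definition grad :: "('a::euclidean_space \<Rightarrow> real) \<Rightarrow> 'a \<Rightarrow> 'a" where
  "grad f x = (SOME g. (f has_derivative (\<lambda>y. g \<bullet> y)) (at x))"

definition hfun :: "('a::euclidean_space \<Rightarrow> real) \<Rightarrow> 'a \<Rightarrow> 'a \<Rightarrow> real" where
  "hfun f x y = f y - y \<bullet> grad f x"

definition geom_convex_tangent :: "('a::euclidean_space \<Rightarrow> real) \<Rightarrow> bool" where
  "geom_convex_tangent f \<longleftrightarrow> (\<exists>\<Lambda>>2. \<exists>r>0. \<forall>x y. x \<noteq> 0 \<longrightarrow> f y \<le> r * f x \<longrightarrow>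
      y \<bullet> grad f x = 0 \<longrightarrow> hfun f x (x + 2 *\<^sub>R y) \<ge> \<Lambda> * hfun f x (x + y))"

definition doubling_tangent :: "('a::euclidean_space \<Rightarrow> real) \<Rightarrow> bool" where
  "doubling_tangent f \<longleftrightarrow> (\<exists>T>0. \<exists>r>0. \<forall>x y. x \<noteq> 0 \<longrightarrow> f y \<le> r * f x \<longrightarrow>
      y \<bullet> grad f x = 0 \<longrightarrow> hfun f x (x + 2 *\<^sub>R y) \<le> T * hfun f x (x + y))"

definition balanced_tangent :: "('a::euclidean_space \<Rightarrow> real) \<Rightarrow> bool" where
  "balanced_tangent f \<longleftrightarrow> (\<exists>r>0. \<exists>K>0. \<forall>x y. x \<noteq> 0 \<longrightarrow> f y \<le> r * f x \<longrightarrow>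
      y \<bullet> grad f x = 0 \<longrightarrow> hfun f x (x + y) \<le> K * hfun f x (x - y))"

end

theory Submission
  imports Defs
begin

text \<open>
  Fix \<open>x \<noteq> 0\<close> and let \<open>S = (\<Sum>i. \<bar>x\<^sub>i\<bar>\<^sup>p)\<close>. A vector \<open>y\<close> lies in the tangent plane at \<open>x\<close> iff
  \<open>(\<Sum>i. sgn x\<^sub>i \<bar>x\<^sub>i\<bar>\<^sup>p\<^sup>-\<^sup>1 y\<^sub>i) = 0\<close>, and then the first-order term of \<open>\<parallel>x + t y\<parallel>\<^sub>p\<^sup>p\<close> drops out:
  \<open>\<parallel>x + t y\<parallel>\<^sub>p\<^sup>p = S + D t\<close>, where \<open>D t\<close> is the sum of the Bregman divergences of \<open>\<bar>\<cdot>\<bar>\<^sup>p\<close> at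
  \<open>x\<^sub>i\<close> in direction \<open>t y\<^sub>i\<close>. Hence \<open>h(x, x + t y) = (S + D t)\<^sup>1\<^sup>/\<^sup>p - S\<^sup>1\<^sup>/\<^sup>p\<close>.

  The derivative \<open>p sgn t \<bar>t\<bar>\<^sup>p\<^sup>-\<^sup>1\<close> of \<open>\<bar>t\<bar>\<^sup>p\<close> is quasisymmetric: its increments over adjacent
  intervals of equal length are comparable up to a constant \<open>C\<close>. Integrating along rays gives
  \<open>D 2 \<le> (2 + 2C) D 1\<close>, \<open>D 1 \<le> C D (-1)\<close> and \<open>D 2 \<ge> (2 + 2/C) D 1\<close>. As \<open>s \<mapsto> s\<^sup>1\<^sup>/\<^sup>p\<close> is concave,
  the first two inequalities pass to \<open>h\<close>. Passing the third one loses at most a factor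
  \<open>(1 + (2 + 2/C) \<delta>)\<^sup>1\<^sup>/\<^sup>p\<^sup>-\<^sup>1\<close> when \<open>D 1 \<le> \<delta> S\<close>, and \<open>\<delta>\<close> is small when \<open>y\<close> is small compared with
  \<open>x\<close>; so the ratio \<open>h(x, x + 2y) / h(x, x + y)\<close> stays above some \<open>\<Lambda> > 2\<close>.
\<close>

section \<open>Signed powers and their increments\<close>

definition signed_powr :: "real \<Rightarrow> real \<Rightarrow> real" where
  "signed_powr q z = sgn z * \<bar>z\<bar> powr q"

lemma signed_powr_nonneg: "0 \<le> z \<Longrightarrow> signed_powr q z = z powr q"
  by (cases "z = 0") (auto simp: signed_powr_def)

lemma signed_powr_minus: "signed_powr q (- z) = - signed_powr q z"
  by (simp add: signed_powr_def)

lemma mult_signed_powr_self: "z * signed_powr q z = \<bar>z\<bar> powr (1 + q)"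
proof -
  have "z * signed_powr q z = \<bar>z\<bar> * \<bar>z\<bar> powr q"
    by (simp add: signed_powr_def abs_sgn)
  then show ?thesis by (simp add: powr_mult_base)
qed

lemma powr_diff_mvt:
  fixes a b q :: real
  assumes "0 < a" "a < b"
  obtains z where "a < z" "z < b" "b powr q - a powr q = q * (b - a) * z powr (q - 1)"
proof -
  have "\<exists>z>a. z < b \<and> b powr q - a powr q = (b - a) * (q * z powr (q - 1))"
    by (rule MVT2) (use assms in \<open>auto intro: has_real_derivative_powr\<close>)
  then show ?thesis using that by (auto simp: mult_ac)
qed

lemma powr_diff_bounds_pos:
  fixes q a b :: real
  assumes q: "0 < q" and a: "0 < a" and ab: "a < b"
  shows "min 1 q * ((b - a) * b powr (q - 1)) \<le> b powr q - a powr q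
      \<and> b powr q - a powr q \<le> max 1 q * ((b - a) * b powr (q - 1))"
proof -
  have split: "b powr q - a powr q = (b - a) * b powr (q - 1) + a * (b powr (q - 1) - a powr (q - 1))"
    using powr_mult_base[of a "q - 1"] powr_mult_base[of b "q - 1"] a ab by (simp add: algebra_simps)
  obtain z where z: "a < z" "z < b" "b powr q - a powr q = q * (b - a) * z powr (q - 1)"
    using powr_diff_mvt[OF a ab] .
  show ?thesis
  proof (cases "1 \<le> q")
    case True
    have "z powr (q - 1) \<le> b powr (q - 1)" "a powr (q - 1) \<le> b powr (q - 1)"
      using True z a by (auto intro: powr_mono2)
    then have "q * (b - a) * z powr (q - 1) \<le> q * (b - a) * b powr (q - 1)"
      "0 \<le> a * (b powr (q - 1) - a powr (q - 1))"
      using q a ab by (simp_all add: mult_left_mono)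
    moreover have "min 1 q * ((b - a) * b powr (q - 1)) = (b - a) * b powr (q - 1)"
      "max 1 q * ((b - a) * b powr (q - 1)) = q * (b - a) * b powr (q - 1)"
      using True by simp_all
    ultimately show ?thesis
      using split z(3) by (intro conjI) linarith+
  next
    case False
    have "b powr (q - 1) \<le> z powr (q - 1)" "b powr (q - 1) \<le> a powr (q - 1)"
      using False z a by (auto intro: powr_mono2')
    then have "q * (b - a) * b powr (q - 1) \<le> q * (b - a) * z powr (q - 1)"
      "a * (b powr (q - 1) - a powr (q - 1)) \<le> 0"
      using q a ab by (simp_all add: mult_left_mono mult_nonneg_nonpos)
    moreover have "min 1 q * ((b - a) * b powr (q - 1)) = q * (b - a) * b powr (q - 1)"
      "max 1 q * ((b - a) * b powr (q - 1)) = (b - a) * b powr (q - 1)"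
      using False by simp_all
    ultimately show ?thesis
      using split z(3) by (intro conjI) linarith+
  qed
qed

lemma powr_diff_bounds:
  fixes q a b :: real
  assumes q: "0 < q" and a: "0 \<le> a" and ab: "a < b"
  shows "min 1 q * (b - a) * b powr (q - 1) \<le> b powr q - a powr q"
    and "b powr q - a powr q \<le> max 1 q * (b - a) * b powr (q - 1)"
proof -
  have "min 1 q * ((b - a) * b powr (q - 1)) \<le> b powr q - a powr q
      \<and> b powr q - a powr q \<le> max 1 q * ((b - a) * b powr (q - 1))"
  proof (cases "a = 0")
    case True
    have "b powr q = b * b powr (q - 1)"
      using powr_mult_base[of b "q - 1"] ab True by simp
    moreover have "0 \<le> b * b powr (q - 1)" using ab True by simp
    ultimately show ?thesis
      using True q by (simp add: mult_left_le_one_le mult_le_cancel_right1)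
  qed (use powr_diff_bounds_pos[OF q _ ab] a in auto)
  then show "min 1 q * (b - a) * b powr (q - 1) \<le> b powr q - a powr q"
    and "b powr q - a powr q \<le> max 1 q * (b - a) * b powr (q - 1)"
    by (simp_all add: mult.assoc)
qed

lemma signed_powr_diff_across_zero:
  fixes q a b :: real
  defines "M \<equiv> max \<bar>a\<bar> \<bar>b\<bar>"
  assumes q: "0 < q" and a: "a < 0" and b: "0 < b"
  shows "(b - a) * M powr (q - 1) / 2 \<le> signed_powr q b - signed_powr q a"
    and "signed_powr q b - signed_powr q a \<le> 2 * ((b - a) * M powr (q - 1))"
proof -
  have M: "0 < M" "M \<le> b - a" "b - a \<le> 2 * M" using a b by (auto simp: M_def)
  have "(b - a) * M powr (q - 1) \<le> 2 * M * M powr (q - 1)" "M * M powr (q - 1) \<le> (b - a) * M powr (q - 1)"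
    using M by (auto intro: mult_right_mono)
  moreover have "M * M powr (q - 1) = M powr q"
    using powr_mult_base[of M "q - 1"] M by simp
  moreover have "signed_powr q b - signed_powr q a = b powr q + (- a) powr q"
    using a b signed_powr_minus[of q a] by (simp add: signed_powr_nonneg)
  moreover have "b powr q \<le> M powr q" "(- a) powr q \<le> M powr q"
    using a b q by (auto intro: powr_mono2 simp: M_def)
  moreover have "M powr q \<le> b powr q + (- a) powr q"
    using a b by (cases "\<bar>a\<bar> \<le> \<bar>b\<bar>") (auto simp: M_def max_def)
  ultimately show "(b - a) * M powr (q - 1) / 2 \<le> signed_powr q b - signed_powr q a"
    and "signed_powr q b - signed_powr q a \<le> 2 * ((b - a) * M powr (q - 1))"
    by linarith+
qed

lemma signed_powr_diff_bounds:
  fixes q a b :: real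
  defines "M \<equiv> max \<bar>a\<bar> \<bar>b\<bar>"
  assumes q: "0 < q" and ab: "a < b"
  shows "min 1 q / 2 * (b - a) * M powr (q - 1) \<le> signed_powr q b - signed_powr q a"
    and "signed_powr q b - signed_powr q a \<le> 2 * max 1 q * (b - a) * M powr (q - 1)"
proof -
  define T where "T = (b - a) * M powr (q - 1)"
  define I where "I = signed_powr q b - signed_powr q a"
  have T: "0 \<le> T" using ab by (simp add: T_def)
  have T_bounds: "min 1 q / 2 * T \<le> min 1 q * T" "min 1 q / 2 * T \<le> T / 2"
    "max 1 q * T \<le> 2 * max 1 q * T" "2 * T \<le> 2 * max 1 q * T"
    using T q by (simp_all add: mult_right_mono mult_left_le_one_le)
  consider "0 \<le> a" | "b \<le> 0" | "a < 0" "0 < b" by linarith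
  then have "min 1 q / 2 * T \<le> I \<and> I \<le> 2 * max 1 q * T"
  proof cases
    case 1
    then have "T = (b - a) * b powr (q - 1)" "I = b powr q - a powr q"
      using ab by (auto simp: M_def T_def I_def signed_powr_nonneg)
    with powr_diff_bounds[OF q 1 ab] have "min 1 q * T \<le> I" "I \<le> max 1 q * T"
      by (simp_all add: mult.assoc)
    with T_bounds show ?thesis by linarith
  next
    case 2
    then have "T = (- a - - b) * (- a) powr (q - 1)" "I = (- a) powr q - (- b) powr q"
      using ab signed_powr_minus[of q a] signed_powr_minus[of q b]
      by (auto simp: M_def T_def I_def signed_powr_nonneg[symmetric])
    with powr_diff_bounds[OF q, of "- b" "- a"] 2 ab have "min 1 q * T \<le> I" "I \<le> max 1 q * T"
      by (simp_all add: mult.assoc)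
    with T_bounds show ?thesis by linarith
  next
    case 3
    then have "T / 2 \<le> I" "I \<le> 2 * T"
      using signed_powr_diff_across_zero[OF q 3] by (simp_all add: M_def T_def I_def)
    with T_bounds show ?thesis by linarith
  qed
  then show "min 1 q / 2 * (b - a) * M powr (q - 1) \<le> signed_powr q b - signed_powr q a"
    and "signed_powr q b - signed_powr q a \<le> 2 * max 1 q * (b - a) * M powr (q - 1)"
    by (auto simp: T_def I_def mult.assoc)
qed

lemma signed_powr_strict_mono:
  assumes "0 < q" "a < b"
  shows "signed_powr q a < signed_powr q b"
proof -
  have "0 < min 1 q / 2 * (b - a) * max \<bar>a\<bar> \<bar>b\<bar> powr (q - 1)"
    using assms by (intro mult_pos_pos) auto
  with signed_powr_diff_bounds(1)[OF assms] show ?thesis by linarith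
qed

lemma powr_le_if_comparable:
  fixes m A B e :: real
  assumes m: "0 < m" and A: "m \<le> A" "A \<le> 3 * m" and B: "m \<le> B" "B \<le> 3 * m"
  shows "A powr e \<le> 3 powr \<bar>e\<bar> * B powr e"
proof (cases "0 \<le> e")
  case True
  have "A powr e \<le> (3 * m) powr e" using A m True by (intro powr_mono2) auto
  also have "\<dots> = 3 powr e * m powr e" using m by (simp add: powr_mult)
  also have "\<dots> \<le> 3 powr e * B powr e" using B m True by (intro mult_left_mono powr_mono2) auto
  finally show ?thesis using True by simp
next
  case False
  have "A powr e \<le> m powr e" using A m False by (intro powr_mono2') auto
  also have "m powr e = 3 powr (- e) * (3 * m) powr e"
    using m by (simp add: powr_mult powr_add[symmetric])
  also have "\<dots> \<le> 3 powr (- e) * B powr e" using B m False by (intro mult_left_mono powr_mono2') auto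
  finally show ?thesis using False by simp
qed

text \<open>The ratio of the two constants of \<open>signed_powr_diff_bounds\<close>, times the price \<open>3 powr \<bar>q - 1\<bar>\<close>
  of comparing \<open>M powr (q - 1)\<close> for two moduli \<open>M\<close> within a factor \<open>3\<close> of each other.\<close>
definition quasisymmetry_const :: "real \<Rightarrow> real" where
  "quasisymmetry_const q = 4 * max 1 q / min 1 q * 3 powr \<bar>q - 1\<bar>"

lemma one_le_quasisymmetry_const: "0 < q \<Longrightarrow> 1 \<le> quasisymmetry_const q"
proof -
  assume q: "0 < q"
  have "1 \<le> 4 * max 1 q / min 1 q" using q by (auto simp: field_simps min_def max_def)
  moreover have "1 \<le> (3::real) powr \<bar>q - 1\<bar>" by (rule ge_one_powr_ge_zero) auto
  ultimately show ?thesis unfolding quasisymmetry_const_def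
    by (metis mult_mono' mult.right_neutral order.trans zero_le_one)
qed

lemma signed_powr_diff_le_diff:
  fixes q a b c d m :: real
  assumes q: "0 < q" and ab: "a < b" and cd: "c < d" and len: "b - a = d - c"
    and m: "0 < m" "m \<le> max \<bar>a\<bar> \<bar>b\<bar>" "max \<bar>a\<bar> \<bar>b\<bar> \<le> 3 * m"
      "m \<le> max \<bar>c\<bar> \<bar>d\<bar>" "max \<bar>c\<bar> \<bar>d\<bar> \<le> 3 * m"
  shows "signed_powr q b - signed_powr q a \<le> quasisymmetry_const q * (signed_powr q d - signed_powr q c)"
proof -
  define Mab where "Mab = max \<bar>a\<bar> \<bar>b\<bar>"
  define Mcd where "Mcd = max \<bar>c\<bar> \<bar>d\<bar>"
  have "Mab powr (q - 1) \<le> 3 powr \<bar>q - 1\<bar> * Mcd powr (q - 1)"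
    using m by (intro powr_le_if_comparable) (auto simp: Mab_def Mcd_def)
  then have "2 * max 1 q * (b - a) * Mab powr (q - 1)
      \<le> 2 * max 1 q * (d - c) * (3 powr \<bar>q - 1\<bar> * Mcd powr (q - 1))"
    using q cd len by (auto intro!: mult_left_mono)
  also have "\<dots> = quasisymmetry_const q * (min 1 q / 2 * (d - c) * Mcd powr (q - 1))"
    using q by (simp add: quasisymmetry_const_def field_simps)
  also have "\<dots> \<le> quasisymmetry_const q * (signed_powr q d - signed_powr q c)"
    using one_le_quasisymmetry_const[OF q] signed_powr_diff_bounds(1)[OF q cd]
    by (auto simp: Mcd_def intro!: mult_left_mono)
  finally show ?thesis
    using signed_powr_diff_bounds(2)[OF q ab] by (simp add: Mab_def)
qed

lemma signed_powr_quasisymmetric: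
  fixes q b w :: real
  assumes q: "0 < q" and w: "0 < w"
  shows "signed_powr q (b + w) - signed_powr q b \<le> quasisymmetry_const q * (signed_powr q b - signed_powr q (b - w))"
    and "signed_powr q b - signed_powr q (b - w) \<le> quasisymmetry_const q * (signed_powr q (b + w) - signed_powr q b)"
proof -
  define m where "m = max \<bar>b\<bar> (w / 2)"
  have "0 < m" using w by (simp add: m_def)
  moreover have "m \<le> max \<bar>b\<bar> \<bar>b + w\<bar>" "max \<bar>b\<bar> \<bar>b + w\<bar> \<le> 3 * m"
    "m \<le> max \<bar>b - w\<bar> \<bar>b\<bar>" "max \<bar>b - w\<bar> \<bar>b\<bar> \<le> 3 * m"
    using w unfolding m_def by (auto simp: max_def abs_if)
  ultimately show "signed_powr q (b + w) - signed_powr q b \<le> quasisymmetry_const q * (signed_powr q b - signed_powr q (b - w))"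
    and "signed_powr q b - signed_powr q (b - w) \<le> quasisymmetry_const q * (signed_powr q (b + w) - signed_powr q b)"
    using w by (auto intro!: signed_powr_diff_le_diff[OF q])
qed

lemma has_real_derivative_abs_powr:
  fixes p z :: real
  assumes p: "1 < p"
  shows "((\<lambda>t. \<bar>t\<bar> powr p) has_real_derivative p * signed_powr (p - 1) z) (at z)"
proof -
  consider "0 < z" | "z < 0" | "z = 0" by linarith
  then show ?thesis
  proof cases
    case 1
    have "((\<lambda>t. t powr p) has_real_derivative p * z powr (p - 1)) (at z)"
      using 1 by (rule has_real_derivative_powr)
    then have "((\<lambda>t. \<bar>t\<bar> powr p) has_real_derivative p * z powr (p - 1)) (at z)"
      by (rule has_field_derivative_transform_within_open[of _ _ _ "{0<..}"]) (use 1 in auto)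
    then show ?thesis using 1 by (simp add: signed_powr_nonneg)
  next
    case 2
    have "((\<lambda>t. (- t) powr p) has_real_derivative p * (- z) powr (p - 1) * (- 1)) (at z)"
      using DERIV_fun_powr[OF DERIV_minus[OF DERIV_ident], of z p] 2 by simp
    then have "((\<lambda>t. \<bar>t\<bar> powr p) has_real_derivative p * (- z) powr (p - 1) * (- 1)) (at z)"
      by (rule has_field_derivative_transform_within_open[of _ _ _ "{..<0}"]) (use 2 in auto)
    then show ?thesis
      using 2 signed_powr_minus[of "p - 1" "- z"] by (simp add: signed_powr_nonneg)
  next
    case 3
    have "((\<lambda>y. \<bar>y\<bar> powr (p - 1)) \<longlongrightarrow> 0) (at 0)"
      using p by (intro tendsto_zero_powrI tendsto_rabs_zero tendsto_ident_at tendsto_const) auto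
    moreover have "\<forall>\<^sub>F y in at 0. \<bar>y\<bar> powr (p - 1) = norm ((\<bar>y\<bar> powr p - \<bar>0\<bar> powr p) / (y - 0))"
    proof (rule eventually_mono[OF eventually_neq_at_within[of 0]])
      fix y :: real
      assume "y \<noteq> 0"
      then show "\<bar>y\<bar> powr (p - 1) = norm ((\<bar>y\<bar> powr p - \<bar>0\<bar> powr p) / (y - 0))"
        using powr_mult_base[of "\<bar>y\<bar>" "p - 1", symmetric] by simp
    qed
    ultimately have "((\<lambda>y. norm ((\<bar>y\<bar> powr p - \<bar>0\<bar> powr p) / (y - 0))) \<longlongrightarrow> 0) (at 0)"
      by (rule Lim_transform_eventually)
    then have "((\<lambda>y. (\<bar>y\<bar> powr p - \<bar>0\<bar> powr p) / (y - 0)) \<longlongrightarrow> 0) (at 0)"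
      by (rule tendsto_norm_zero_cancel)
    then show ?thesis
      using 3 by (simp add: has_field_derivative_iff signed_powr_def)
  qed
qed

lemma convex_on_abs_powr: "1 < p \<Longrightarrow> convex_on UNIV (\<lambda>t::real. \<bar>t\<bar> powr p)"
  by (rule convex_on_realI[where f' = "\<lambda>z. p * signed_powr (p - 1) z"])
     (auto intro: has_real_derivative_abs_powr mult_left_mono simp: less_imp_le signed_powr_strict_mono le_less)

lemma abs_add_powr_le:
  fixes a b r :: real
  assumes p: "1 < p" and r: "0 < r"
  shows "\<bar>a + b\<bar> powr p \<le> (1 + r) powr (p - 1) * (\<bar>a\<bar> powr p + r powr (1 - p) * \<bar>b\<bar> powr p)"
proof -
  define \<theta> where "\<theta> = r / (1 + r)"
  have \<theta>: "0 \<le> \<theta>" "\<theta> \<le> 1" using r by (auto simp: \<theta>_def)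
  have "(1 - \<theta>) * (1 + r) = 1" "\<theta> * ((1 + r) / r) = 1"
    using r add_pos_pos[OF r mult_pos_pos[OF r r]] by (simp_all add: \<theta>_def field_simps)
  then have "a + b = (1 - \<theta>) *\<^sub>R ((1 + r) * a) + \<theta> *\<^sub>R ((1 + r) / r * b)"
    by (simp add: mult.assoc[symmetric])
  then have "\<bar>a + b\<bar> powr p \<le> (1 - \<theta>) * \<bar>(1 + r) * a\<bar> powr p + \<theta> * \<bar>(1 + r) / r * b\<bar> powr p"
    using convex_onD[OF convex_on_abs_powr[OF p] \<theta>, of "(1 + r) * a" "(1 + r) / r * b"] by simp
  also have "(1 - \<theta>) * \<bar>(1 + r) * a\<bar> powr p = (1 + r) powr (p - 1) * \<bar>a\<bar> powr p"
    unfolding abs_mult powr_mult using r by (simp add: \<theta>_def powr_diff field_simps)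
  also have "\<theta> * \<bar>(1 + r) / r * b\<bar> powr p = (1 + r) powr (p - 1) * (r powr (1 - p) * \<bar>b\<bar> powr p)"
    unfolding abs_mult abs_divide powr_mult powr_divide using r by (simp add: \<theta>_def powr_diff field_simps)
  finally show ?thesis by (simp add: distrib_left)
qed

section \<open>Bregman divergences for a quasisymmetric derivative\<close>

definition bregman :: "(real \<Rightarrow> real) \<Rightarrow> (real \<Rightarrow> real) \<Rightarrow> real \<Rightarrow> real \<Rightarrow> real" where
  "bregman f f' a u = f (a + u) - f a - f' a * u"

lemma bregman_reflect: "bregman (\<lambda>t. f (- t)) (\<lambda>t. - f' (- t)) (- a) (- u) = bregman f f' a u"
  by (simp add: bregman_def ac_simps)

locale quasisymmetric_derivative =
  fixes f f' :: "real \<Rightarrow> real" and C :: real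
  assumes has_derivative: "\<And>t. (f has_real_derivative f' t) (at t)"
    and mono_derivative: "mono f'"
    and const_pos: "0 < C"
    and right_le: "\<And>b w. 0 < w \<Longrightarrow> f' (b + w) - f' b \<le> C * (f' b - f' (b - w))"
    and left_le: "\<And>b w. 0 < w \<Longrightarrow> f' b - f' (b - w) \<le> C * (f' (b + w) - f' b)"
begin

lemma reflect: "quasisymmetric_derivative (\<lambda>t. f (- t)) (\<lambda>t. - f' (- t)) C"
proof
  show "((\<lambda>t. f (- t)) has_real_derivative - f' (- t)) (at t)" for t
    using DERIV_chain2[OF has_derivative DERIV_minus[OF DERIV_ident]] by simp
  show "mono (\<lambda>t. - f' (- t))"
    by (intro monoI) (simp add: monoD[OF mono_derivative])
  show "0 < C" by (rule const_pos)
  show "- f' (- (b + w)) - - f' (- b) \<le> C * (- f' (- b) - - f' (- (b - w)))" if "0 < w" for b w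
    using left_le[OF that, of "- b"] by (simp add: algebra_simps)
  show "- f' (- b) - - f' (- (b - w)) \<le> C * (- f' (- (b + w)) - - f' (- b))" if "0 < w" for b w
    using right_le[OF that, of "- b"] by (simp add: algebra_simps)
qed

lemma bregman_scaled_has_derivative:
  "((\<lambda>w. bregman f f' a (c * w)) has_real_derivative c * (f' (a + c * w) - f' a)) (at w)"
proof -
  have "((\<lambda>w. a + c * w) has_real_derivative c) (at w)"
    by (auto intro!: derivative_eq_intros)
  then have "((\<lambda>w. f (a + c * w) - f a - f' a * (c * w)) has_real_derivative
      f' (a + c * w) * c - 0 - f' a * c) (at w)"
    by (intro DERIV_diff DERIV_chain2[OF has_derivative] DERIV_const DERIV_cmult) auto
  then show ?thesis by (simp add: bregman_def algebra_simps)
qed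

text \<open>All divergences vanish at \<open>u = 0\<close>, so comparing their derivatives along the ray suffices.\<close>
lemma bregman_compare:
  assumes u: "0 \<le> u"
    and deriv_le: "\<And>w. 0 < w \<Longrightarrow> \<alpha> * (c * (f' (a + c * w) - f' a)) \<le> \<beta> * (d * (f' (a + d * w) - f' a))"
  shows "\<alpha> * bregman f f' a (c * u) \<le> \<beta> * bregman f f' a (d * u)"
proof -
  define H where "H w = \<beta> * bregman f f' a (d * w) - \<alpha> * bregman f f' a (c * w)" for w
  have "H 0 \<le> H u"
  proof (rule DERIV_nonneg_imp_nondecreasing[OF u])
    fix w :: real
    assume "0 \<le> w"
    moreover have "(H has_real_derivative
        \<beta> * (d * (f' (a + d * w) - f' a)) - \<alpha> * (c * (f' (a + c * w) - f' a))) (at w)"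
      unfolding H_def by (intro DERIV_diff DERIV_cmult bregman_scaled_has_derivative)
    ultimately show "\<exists>y. (H has_real_derivative y) (at w) \<and> 0 \<le> y"
      using deriv_le[of w] by (cases "w = 0") auto
  qed
  then show ?thesis by (simp add: H_def bregman_def)
qed

lemma bregman_nonneg: "0 \<le> bregman f f' a u"
proof -
  have "0 \<le> u * (f' (a + u * w) - f' a)" if "0 < w" for w
  proof (cases "0 \<le> u")
    case True
    with that have "f' a \<le> f' (a + u * w)" by (intro monoD[OF mono_derivative]) simp
    with True show ?thesis by simp
  next
    case False
    with that have "f' (a + u * w) \<le> f' a"
      by (intro monoD[OF mono_derivative]) (simp add: mult_nonpos_nonneg)
    with False show ?thesis by (simp add: mult_nonpos_nonpos)
  qed
  then show ?thesis using bregman_compare[where u = 1 and \<alpha> = 0 and \<beta> = 1 and d = u] by simp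
qed

lemma bregman_double_ge_nonneg:
  assumes "0 \<le> u"
  shows "(2 + 2 / C) * bregman f f' a u \<le> bregman f f' a (2 * u)"
proof -
  have "(2 + 2 / C) * (1 * (f' (a + 1 * w) - f' a)) \<le> 1 * (2 * (f' (a + 2 * w) - f' a))"
    if "0 < w" for w
    using left_le[OF that, of "a + w"] const_pos by (simp add: field_simps)
  then show ?thesis using bregman_compare[OF assms, of "2 + 2 / C" 1 a 1 2] by simp
qed

lemma bregman_double_le_nonneg:
  assumes "0 \<le> u"
  shows "bregman f f' a (2 * u) \<le> (2 + 2 * C) * bregman f f' a u"
proof -
  have "1 * (2 * (f' (a + 2 * w) - f' a)) \<le> (2 + 2 * C) * (1 * (f' (a + 1 * w) - f' a))"
    if "0 < w" for w
    using right_le[OF that, of "a + w"] by (simp add: algebra_simps)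
  then show ?thesis using bregman_compare[OF assms, of 1 2 a "2 + 2 * C" 1] by simp
qed

lemma bregman_le_reflected_nonneg:
  assumes "0 \<le> u"
  shows "bregman f f' a u \<le> C * bregman f f' a (- u)"
proof -
  have "1 * (1 * (f' (a + 1 * w) - f' a)) \<le> C * (- 1 * (f' (a + - 1 * w) - f' a))"
    if "0 < w" for w
    using right_le[OF that, of a] by (simp add: algebra_simps)
  then show ?thesis using bregman_compare[OF assms, of 1 1 a C "- 1"] by simp
qed

lemma bregman_double_ge: "(2 + 2 / C) * bregman f f' a u \<le> bregman f f' a (2 * u)"
proof (cases "0 \<le> u")
  case False
  then show ?thesis
    using quasisymmetric_derivative.bregman_double_ge_nonneg[OF reflect, of "- u" "- a"]
    by (simp add: bregman_reflect)
qed (rule bregman_double_ge_nonneg)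

lemma bregman_double_le: "bregman f f' a (2 * u) \<le> (2 + 2 * C) * bregman f f' a u"
proof (cases "0 \<le> u")
  case False
  then show ?thesis
    using quasisymmetric_derivative.bregman_double_le_nonneg[OF reflect, of "- u" "- a"]
    by (simp add: bregman_reflect)
qed (rule bregman_double_le_nonneg)

lemma bregman_le_reflected: "bregman f f' a u \<le> C * bregman f f' a (- u)"
proof (cases "0 \<le> u")
  case False
  then show ?thesis
    using quasisymmetric_derivative.bregman_le_reflected_nonneg[OF reflect, of "- u" "- a"]
      bregman_reflect[of f f' a "- u"]
    by (simp add: bregman_reflect)
qed (rule bregman_le_reflected_nonneg)

end

lemma quasisymmetric_derivative_abs_powr:
  assumes p: "1 < p"
  shows "quasisymmetric_derivative (\<lambda>t. \<bar>t\<bar> powr p) (\<lambda>t. p * signed_powr (p - 1) t)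
    (quasisymmetry_const (p - 1))"
proof
  show "((\<lambda>t. \<bar>t\<bar> powr p) has_real_derivative p * signed_powr (p - 1) t) (at t)" for t
    using has_real_derivative_abs_powr[OF p] .
  show "mono (\<lambda>t. p * signed_powr (p - 1) t)"
    using p signed_powr_strict_mono[of "p - 1"] by (auto intro!: monoI simp: le_less)
  show "0 < quasisymmetry_const (p - 1)"
    using one_le_quasisymmetry_const[of "p - 1"] p by simp
  fix b w :: real
  assume w: "0 < w"
  have q: "0 < p - 1" using p by simp
  show "p * signed_powr (p - 1) (b + w) - p * signed_powr (p - 1) b
      \<le> quasisymmetry_const (p - 1) * (p * signed_powr (p - 1) b - p * signed_powr (p - 1) (b - w))"
    using mult_left_mono[OF signed_powr_quasisymmetric(1)[OF q w, of b], of p] p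
    by (simp add: right_diff_distrib mult.left_commute)
  show "p * signed_powr (p - 1) b - p * signed_powr (p - 1) (b - w)
      \<le> quasisymmetry_const (p - 1) * (p * signed_powr (p - 1) (b + w) - p * signed_powr (p - 1) b)"
    using mult_left_mono[OF signed_powr_quasisymmetric(2)[OF q w, of b], of p] p
    by (simp add: right_diff_distrib mult.left_commute)
qed

section \<open>Increments of a concave power\<close>

definition powr_increment :: "real \<Rightarrow> real \<Rightarrow> real \<Rightarrow> real" where
  "powr_increment e S D = (S + D) powr e - S powr e"

lemma powr_increment_mono:
  "0 \<le> e \<Longrightarrow> 0 < S \<Longrightarrow> 0 \<le> D \<Longrightarrow> D \<le> D' \<Longrightarrow> powr_increment e S D \<le> powr_increment e S D'"
  unfolding powr_increment_def by (auto intro: powr_mono2)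

lemma powr_increment_nonneg: "0 \<le> e \<Longrightarrow> 0 \<le> S \<Longrightarrow> 0 \<le> D \<Longrightarrow> 0 \<le> powr_increment e S D"
  unfolding powr_increment_def by (simp add: powr_mono2)

lemma powr_increment_ge:
  assumes e: "0 \<le> e" "e \<le> 1" and S: "0 < S" and D: "0 \<le> D"
  shows "e * D * (S + D) powr (e - 1) \<le> powr_increment e S D"
proof (cases "D = 0")
  case False
  with D have "0 < D" by simp
  then obtain z where z: "S < z" "z < S + D" "powr_increment e S D = e * D * z powr (e - 1)"
    using powr_diff_mvt[OF S, of "S + D" e] by (auto simp: powr_increment_def)
  have "(S + D) powr (e - 1) \<le> z powr (e - 1)"
    using z S e by (intro powr_mono2') auto
  with z(3) e D show ?thesis by (auto intro: mult_left_mono)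
qed (simp add: powr_increment_def)

lemma powr_increment_le:
  assumes e: "0 \<le> e" "e \<le> 1" and S: "0 < S" and D: "0 \<le> D"
  shows "powr_increment e S D \<le> e * D * S powr (e - 1)"
proof (cases "D = 0")
  case False
  with D have "0 < D" by simp
  then obtain z where z: "S < z" "z < S + D" "powr_increment e S D = e * D * z powr (e - 1)"
    using powr_diff_mvt[OF S, of "S + D" e] by (auto simp: powr_increment_def)
  have "z powr (e - 1) \<le> S powr (e - 1)"
    using z S e by (intro powr_mono2') auto
  with z(3) e D show ?thesis by (auto intro: mult_left_mono)
qed (simp add: powr_increment_def)

text \<open>Concavity of \<open>s \<mapsto> s powr e\<close>.\<close>
lemma powr_increment_scale_le:
  assumes e: "0 \<le> e" "e \<le> 1" and S: "0 < S" and D: "0 \<le> D" and t: "1 \<le> t"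
  shows "powr_increment e S (t * D) \<le> t * powr_increment e S D"
proof (cases "D = 0 \<or> t = 1")
  case False
  with D t have D: "0 < D" and t: "1 < t" by auto
  obtain z where z: "S < z" "z < S + D" "powr_increment e S D = e * D * z powr (e - 1)"
    using powr_diff_mvt[OF S, of "S + D" e] D by (auto simp: powr_increment_def)
  obtain y where y: "S + D < y" "powr_increment e (S + D) ((t - 1) * D) = e * ((t - 1) * D) * y powr (e - 1)"
    using powr_diff_mvt[of "S + D" "S + t * D" e] S D t
    by (auto simp: powr_increment_def algebra_simps)
  have "y powr (e - 1) \<le> z powr (e - 1)"
    using z y S e by (intro powr_mono2') auto
  then have "e * ((t - 1) * D) * y powr (e - 1) \<le> e * ((t - 1) * D) * z powr (e - 1)"
    using e D t by (intro mult_left_mono) auto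
  then have "powr_increment e (S + D) ((t - 1) * D) \<le> (t - 1) * powr_increment e S D"
    unfolding y(2) z(3) by (simp add: mult_ac)
  moreover have "powr_increment e S (t * D) = powr_increment e S D + powr_increment e (S + D) ((t - 1) * D)"
    by (simp add: powr_increment_def algebra_simps)
  ultimately show ?thesis by (simp add: algebra_simps)
qed (auto simp: powr_increment_def)

lemma powr_increment_scale_ge:
  assumes e: "0 \<le> e" "e \<le> 1" and S: "0 < S" and D: "0 \<le> D" "D \<le> \<delta> * S" and c: "0 \<le> c"
  shows "c * (1 + c * \<delta>) powr (e - 1) * powr_increment e S D \<le> powr_increment e S (c * D)"
proof -
  have "c * (1 + c * \<delta>) powr (e - 1) * powr_increment e S D
      \<le> c * (1 + c * \<delta>) powr (e - 1) * (e * D * S powr (e - 1))"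
    using powr_increment_le[OF e S D(1)] c by (intro mult_left_mono) auto
  also have "\<dots> = e * (c * D) * ((1 + c * \<delta>) * S) powr (e - 1)"
    by (simp add: powr_mult)
  also have "\<dots> \<le> e * (c * D) * (S + c * D) powr (e - 1)"
  proof -
    have "S + c * D \<le> (1 + c * \<delta>) * S"
      using mult_left_mono[OF D(2) c] by (simp add: algebra_simps)
    moreover have "0 < S + c * D" using c D S by (simp add: add_pos_nonneg)
    ultimately show ?thesis
      using e D c by (intro mult_left_mono powr_mono2') auto
  qed
  also have "\<dots> \<le> powr_increment e S (c * D)"
    using powr_increment_ge[OF e S] D c by simp
  finally show ?thesis .
qed

lemma exists_pos_le_scaled_powr:
  fixes L c a :: real
  assumes "L < c"
  shows "\<exists>\<delta>>0. L \<le> c * (1 + c * \<delta>) powr a"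
proof -
  have "((\<lambda>\<delta>. c * (1 + c * \<delta>) powr a) \<longlongrightarrow> c * (1 + c * 0) powr a) (at_right 0)"
    by (intro tendsto_intros) auto
  then have "\<forall>\<^sub>F \<delta> in at_right 0. L < c * (1 + c * \<delta>) powr a"
    using assms by (intro order_tendstoD) auto
  moreover have "\<forall>\<^sub>F \<delta> in at_right 0. 0 < (\<delta>::real)"
    by (rule eventually_at_right_less)
  ultimately have "\<forall>\<^sub>F \<delta> in at_right 0. 0 < \<delta> \<and> L \<le> c * (1 + c * \<delta>) powr a"
    by eventually_elim auto
  then show ?thesis
    using eventually_happens'[OF trivial_limit_at_right_real[of "0::real"]] by blast
qed

section \<open>The \<open>p\<close>-norm near its tangent planes\<close>

abbreviation abs_powr_bregman :: "real \<Rightarrow> real \<Rightarrow> real \<Rightarrow> real" where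
  "abs_powr_bregman p \<equiv> bregman (\<lambda>t. \<bar>t\<bar> powr p) (\<lambda>t. p * signed_powr (p - 1) t)"

definition psum :: "real \<Rightarrow> real^'n \<Rightarrow> real" where
  "psum p x = (\<Sum>i\<in>UNIV. \<bar>x $ i\<bar> powr p)"

definition pnorm_gradient :: "real \<Rightarrow> real^'n \<Rightarrow> real^'n" where
  "pnorm_gradient p x = (\<chi> i. psum p x powr (1 / p - 1) * signed_powr (p - 1) (x $ i))"

lemma pnorm_eq_psum: "pnorm p x = psum p x powr (1 / p)"
  by (simp add: pnorm_def psum_def)

lemma psum_nonneg: "0 \<le> psum p x"
  by (simp add: psum_def sum_nonneg)

lemma psum_pos: "x \<noteq> 0 \<Longrightarrow> 0 < psum p x"
proof -
  assume "x \<noteq> 0"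
  then obtain i where "x $ i \<noteq> 0" by (auto simp: vec_eq_iff)
  then show ?thesis unfolding psum_def by (intro sum_pos2[of UNIV i]) auto
qed

lemma psum_eq_pnorm_powr: "0 < p \<Longrightarrow> psum p x = pnorm p x powr p"
  by (simp add: pnorm_eq_psum powr_powr psum_nonneg)

lemma has_derivative_pnorm:
  fixes x :: "real^'n"
  assumes p: "1 < p" and x: "x \<noteq> 0"
  shows "(pnorm p has_derivative (\<lambda>h. pnorm_gradient p x \<bullet> h)) (at x)"
proof -
  have "(psum p has_derivative (\<lambda>h. \<Sum>i\<in>UNIV. h $ i * (p * signed_powr (p - 1) (x $ i)))) (at x)"
    unfolding psum_def[abs_def]
    by (intro has_derivative_sum DERIV_compose_FDERIV[OF has_real_derivative_abs_powr[OF p]]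
        bounded_linear_imp_has_derivative bounded_linear_vec_nth)
  moreover have "((\<lambda>s. s powr (1 / p)) has_real_derivative 1 / p * psum p x powr (1 / p - 1)) (at (psum p x))"
    using psum_pos[OF x] by (rule has_real_derivative_powr)
  ultimately have "((\<lambda>y. psum p y powr (1 / p)) has_derivative (\<lambda>h.
      (\<Sum>i\<in>UNIV. h $ i * (p * signed_powr (p - 1) (x $ i))) * (1 / p * psum p x powr (1 / p - 1)))) (at x)"
    by (rule DERIV_compose_FDERIV[rotated])
  moreover have "(\<Sum>i\<in>UNIV. h $ i * (p * signed_powr (p - 1) (x $ i))) * (1 / p * psum p x powr (1 / p - 1))
      = pnorm_gradient p x \<bullet> h" for h :: "real^'n"
    unfolding pnorm_gradient_def inner_vec_def sum_distrib_right
    by (rule sum.cong) (use p in auto)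
  ultimately show ?thesis by (simp add: pnorm_eq_psum[abs_def])
qed

lemma grad_pnorm:
  fixes x :: "real^'n"
  assumes "1 < p" "x \<noteq> 0"
  shows "grad (pnorm p) x = pnorm_gradient p x"
  unfolding grad_def
proof (rule some_equality)
  show "(pnorm p has_derivative (\<lambda>y. pnorm_gradient p x \<bullet> y)) (at x)"
    by (rule has_derivative_pnorm[OF assms])
next
  fix g
  assume "(pnorm p has_derivative (\<lambda>y. g \<bullet> y)) (at x)"
  with has_derivative_pnorm[OF assms] have "(\<lambda>y. pnorm_gradient p x \<bullet> y) = (\<lambda>y. g \<bullet> y)"
    by (rule has_derivative_unique)
  then show "g = pnorm_gradient p x"
    by (metis vector_eq_rdot)
qed

lemma inner_pnorm_gradient:
  "y \<bullet> pnorm_gradient p x = psum p x powr (1 / p - 1) * (\<Sum>i\<in>UNIV. signed_powr (p - 1) (x $ i) * y $ i)"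
  by (simp add: pnorm_gradient_def inner_vec_def sum_distrib_left mult_ac)

lemma inner_pnorm_gradient_self: "x \<bullet> pnorm_gradient p x = pnorm p x"
proof -
  have "x \<bullet> pnorm_gradient p x = psum p x powr (1 / p - 1) * psum p x"
    by (simp add: inner_pnorm_gradient mult.commute[of _ "x $ _"] mult_signed_powr_self psum_def)
  also have "\<dots> = pnorm p x"
    using powr_mult_base[OF psum_nonneg, of p x "1 / p - 1"] by (simp add: pnorm_eq_psum mult.commute)
  finally show ?thesis .
qed

lemma tangent_pnorm_iff:
  fixes x y :: "real^'n"
  assumes "1 < p" "x \<noteq> 0"
  shows "y \<bullet> grad (pnorm p) x = 0 \<longleftrightarrow> (\<Sum>i\<in>UNIV. signed_powr (p - 1) (x $ i) * y $ i) = 0"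
  using psum_pos[OF assms(2), of p] by (simp add: grad_pnorm[OF assms] inner_pnorm_gradient)

lemma psum_add_scaled_tangent:
  fixes x y :: "real^'n"
  assumes "(\<Sum>i\<in>UNIV. signed_powr (p - 1) (x $ i) * y $ i) = 0"
  shows "psum p (x + t *\<^sub>R y) = psum p x + (\<Sum>i\<in>UNIV. abs_powr_bregman p (x $ i) (t * y $ i))"
proof -
  have "psum p (x + t *\<^sub>R y) = (\<Sum>i\<in>UNIV. \<bar>x $ i\<bar> powr p + abs_powr_bregman p (x $ i) (t * y $ i)
      + (p * t) * (signed_powr (p - 1) (x $ i) * y $ i))"
    by (simp add: psum_def bregman_def algebra_simps)
  also have "\<dots> = psum p x + (\<Sum>i\<in>UNIV. abs_powr_bregman p (x $ i) (t * y $ i))"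
    using assms by (simp add: psum_def sum.distrib flip: sum_distrib_left)
  finally show ?thesis .
qed

lemma hfun_pnorm_tangent:
  fixes x y :: "real^'n"
  assumes p: "1 < p" and x: "x \<noteq> 0" and tan: "y \<bullet> grad (pnorm p) x = 0"
  shows "hfun (pnorm p) x (x + t *\<^sub>R y)
    = powr_increment (1 / p) (psum p x) (\<Sum>i\<in>UNIV. abs_powr_bregman p (x $ i) (t * y $ i))"
  using tan psum_add_scaled_tangent[of p x y t] tangent_pnorm_iff[OF p x, of y]
  by (simp add: hfun_def grad_pnorm[OF p x] inner_add_left inner_pnorm_gradient_self
      pnorm_eq_psum powr_increment_def)

lemma psum_add_le:
  fixes x y :: "real^'n"
  assumes p: "1 < p" and r: "0 < r" and y: "psum p y \<le> r powr p * psum p x"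
  shows "psum p (x + y) \<le> (1 + r) powr p * psum p x"
proof -
  have "psum p (x + y) \<le> (\<Sum>i\<in>UNIV. (1 + r) powr (p - 1) * (\<bar>x $ i\<bar> powr p + r powr (1 - p) * \<bar>y $ i\<bar> powr p))"
    unfolding psum_def by (intro sum_mono) (simp add: abs_add_powr_le[OF p r])
  also have "\<dots> = (1 + r) powr (p - 1) * (psum p x + r powr (1 - p) * psum p y)"
    by (simp add: psum_def sum.distrib sum_distrib_left distrib_left)
  also have "\<dots> \<le> (1 + r) powr (p - 1) * (psum p x + r powr (1 - p) * (r powr p * psum p x))"
    using y by (intro mult_left_mono add_left_mono) auto
  also have "r powr (1 - p) * (r powr p * psum p x) = r * psum p x"
    using r by (simp add: mult.assoc[symmetric] powr_add[symmetric])
  also have "(1 + r) powr (p - 1) * (psum p x + r * psum p x) = (1 + r) powr (p - 1) * (1 + r) * psum p x"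
    by (simp add: algebra_simps)
  also have "\<dots> = (1 + r) powr p * psum p x"
    using powr_mult_base[of "1 + r" "p - 1"] r by (simp add: mult.commute)
  finally show ?thesis .
qed

lemma sum_abs_powr_bregman_le:
  fixes x y :: "real^'n"
  assumes p: "1 < p" and tan: "(\<Sum>i\<in>UNIV. signed_powr (p - 1) (x $ i) * y $ i) = 0"
    and r: "0 < r" and small: "pnorm p y \<le> r * pnorm p x"
  shows "(\<Sum>i\<in>UNIV. abs_powr_bregman p (x $ i) (y $ i)) \<le> ((1 + r) powr p - 1) * psum p x"
proof -
  have "psum p y = pnorm p y powr p"
    using p by (simp add: psum_eq_pnorm_powr)
  also have "\<dots> \<le> (r * pnorm p x) powr p"
    using small p by (intro powr_mono2) (auto simp: pnorm_eq_psum)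
  also have "\<dots> = r powr p * psum p x"
    using p by (simp add: powr_mult psum_eq_pnorm_powr)
  finally have "psum p (x + y) \<le> (1 + r) powr p * psum p x"
    by (rule psum_add_le[OF p r])
  with psum_add_scaled_tangent[OF tan, of 1] show ?thesis
    by (simp add: algebra_simps)
qed

lemma hfun_pnorm_tangent_nonneg:
  fixes x y :: "real^'n"
  assumes p: "1 < p" and x: "x \<noteq> 0" and tan: "y \<bullet> grad (pnorm p) x = 0"
  shows "0 \<le> hfun (pnorm p) x (x + t *\<^sub>R y)"
proof -
  interpret quasisymmetric_derivative "\<lambda>t. \<bar>t\<bar> powr p" "\<lambda>t. p * signed_powr (p - 1) t"
    "quasisymmetry_const (p - 1)"
    by (rule quasisymmetric_derivative_abs_powr[OF p])
  show ?thesis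
    using p by (simp add: hfun_pnorm_tangent[OF p x tan] powr_increment_nonneg psum_nonneg
        sum_nonneg bregman_nonneg)
qed

lemma doubling_tangent_pnorm:
  assumes p: "1 < p"
  shows "doubling_tangent (pnorm p :: real^'n \<Rightarrow> real)"
proof -
  interpret quasisymmetric_derivative "\<lambda>t. \<bar>t\<bar> powr p" "\<lambda>t. p * signed_powr (p - 1) t"
    "quasisymmetry_const (p - 1)"
    by (rule quasisymmetric_derivative_abs_powr[OF p])
  define T where "T = 2 + 2 * quasisymmetry_const (p - 1)"
  have T: "1 \<le> T" using const_pos by (simp add: T_def)
  have "hfun (pnorm p) x (x + 2 *\<^sub>R y) \<le> T * hfun (pnorm p) x (x + y)"
    if x: "x \<noteq> 0" and tan: "y \<bullet> grad (pnorm p) x = 0" for x y :: "real^'n"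
  proof -
    define D where "D t = (\<Sum>i\<in>UNIV. abs_powr_bregman p (x $ i) (t * y $ i))" for t
    note h = hfun_pnorm_tangent[OF p x tan, folded D_def]
    have e: "0 \<le> 1 / p" "1 / p \<le> 1" using p by auto
    have "D 2 \<le> T * D 1"
      unfolding D_def T_def sum_distrib_left by (intro sum_mono) (simp add: bregman_double_le)
    then have "powr_increment (1 / p) (psum p x) (D 2) \<le> powr_increment (1 / p) (psum p x) (T * D 1)"
      by (intro powr_increment_mono[OF e(1) psum_pos[OF x]]) (auto simp: D_def sum_nonneg bregman_nonneg)
    also have "\<dots> \<le> T * powr_increment (1 / p) (psum p x) (D 1)"
      using T by (intro powr_increment_scale_le[OF e psum_pos[OF x]]) (auto simp: D_def sum_nonneg bregman_nonneg)
    finally show ?thesis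
      using h[of 2] h[of 1] by simp
  qed
  then show ?thesis
    unfolding doubling_tangent_def using T by (intro exI[of _ T]) (auto intro: exI[of _ 1])
qed

lemma balanced_tangent_pnorm:
  assumes p: "1 < p"
  shows "balanced_tangent (pnorm p :: real^'n \<Rightarrow> real)"
proof -
  interpret quasisymmetric_derivative "\<lambda>t. \<bar>t\<bar> powr p" "\<lambda>t. p * signed_powr (p - 1) t"
    "quasisymmetry_const (p - 1)"
    by (rule quasisymmetric_derivative_abs_powr[OF p])
  define K where "K = quasisymmetry_const (p - 1)"
  have K: "1 \<le> K" using one_le_quasisymmetry_const[of "p - 1"] p by (simp add: K_def)
  have "hfun (pnorm p) x (x + y) \<le> K * hfun (pnorm p) x (x - y)"
    if x: "x \<noteq> 0" and tan: "y \<bullet> grad (pnorm p) x = 0" for x y :: "real^'n"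
  proof -
    define D where "D t = (\<Sum>i\<in>UNIV. abs_powr_bregman p (x $ i) (t * y $ i))" for t
    note h = hfun_pnorm_tangent[OF p x tan, folded D_def]
    have e: "0 \<le> 1 / p" "1 / p \<le> 1" using p by auto
    have "D 1 \<le> K * D (- 1)"
      unfolding D_def K_def sum_distrib_left by (intro sum_mono) (simp add: bregman_le_reflected)
    then have "powr_increment (1 / p) (psum p x) (D 1) \<le> powr_increment (1 / p) (psum p x) (K * D (- 1))"
      by (intro powr_increment_mono[OF e(1) psum_pos[OF x]]) (auto simp: D_def sum_nonneg bregman_nonneg)
    also have "\<dots> \<le> K * powr_increment (1 / p) (psum p x) (D (- 1))"
      using K by (intro powr_increment_scale_le[OF e psum_pos[OF x]]) (auto simp: D_def sum_nonneg bregman_nonneg)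
    finally show ?thesis
      using h[of 1] h[of "- 1"] by simp
  qed
  then show ?thesis
    unfolding balanced_tangent_def using K by (intro exI[of _ 1]) (auto intro: exI[of _ K])
qed

lemma hfun_pnorm_double_ge:
  fixes p \<delta> :: real and x y :: "real^'n"
  defines "c \<equiv> 2 + 2 / quasisymmetry_const (p - 1)"
  assumes p: "1 < p" and x: "x \<noteq> 0" and tan: "y \<bullet> grad (pnorm p) x = 0"
    and small: "(\<Sum>i\<in>UNIV. abs_powr_bregman p (x $ i) (y $ i)) \<le> \<delta> * psum p x"
  shows "c * (1 + c * \<delta>) powr (1 / p - 1) * hfun (pnorm p) x (x + y) \<le> hfun (pnorm p) x (x + 2 *\<^sub>R y)"
proof -
  interpret quasisymmetric_derivative "\<lambda>t. \<bar>t\<bar> powr p" "\<lambda>t. p * signed_powr (p - 1) t"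
    "quasisymmetry_const (p - 1)"
    by (rule quasisymmetric_derivative_abs_powr[OF p])
  define S where "S = psum p x"
  define D where "D t = (\<Sum>i\<in>UNIV. abs_powr_bregman p (x $ i) (t * y $ i))" for t
  note h = hfun_pnorm_tangent[OF p x tan, folded S_def D_def]
  have S: "0 < S" using psum_pos[OF x] by (simp add: S_def)
  have e: "0 \<le> 1 / p" "1 / p \<le> 1" using p by auto
  have c: "0 \<le> c" using const_pos by (simp add: c_def)
  have D_nonneg: "0 \<le> D t" for t by (simp add: D_def sum_nonneg bregman_nonneg)
  have "c * D 1 \<le> D 2"
    unfolding D_def c_def sum_distrib_left by (intro sum_mono) (simp add: bregman_double_ge)
  have "c * (1 + c * \<delta>) powr (1 / p - 1) * powr_increment (1 / p) S (D 1)
      \<le> powr_increment (1 / p) S (c * D 1)"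
    using small c by (intro powr_increment_scale_ge[OF e S D_nonneg]) (simp_all add: D_def S_def)
  also have "\<dots> \<le> powr_increment (1 / p) S (D 2)"
    using \<open>c * D 1 \<le> D 2\<close> c D_nonneg[of 1] by (intro powr_increment_mono[OF e(1) S]) auto
  finally show ?thesis
    using h[of 1] h[of 2] by simp
qed

lemma geom_convex_tangent_pnorm:
  assumes p: "1 < p"
  shows "geom_convex_tangent (pnorm p :: real^'n \<Rightarrow> real)"
proof -
  define c where "c = 2 + 2 / quasisymmetry_const (p - 1)"
  have c: "2 < c" using one_le_quasisymmetry_const[of "p - 1"] p by (simp add: c_def)
  define L where "L = (c + 2) / 2"
  obtain \<delta> where \<delta>: "0 < \<delta>" "L \<le> c * (1 + c * \<delta>) powr (1 / p - 1)"
    using exists_pos_le_scaled_powr[of L c "1 / p - 1"] c by (auto simp: L_def)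
  define r where "r = (1 + \<delta>) powr (1 / p) - 1"
  have r: "0 < r" using \<delta> p by (simp add: r_def)
  have r_powr: "(1 + r) powr p - 1 = \<delta>" using \<delta> p by (simp add: r_def powr_powr)
  have "L * hfun (pnorm p) x (x + y) \<le> hfun (pnorm p) x (x + 2 *\<^sub>R y)"
    if x: "x \<noteq> 0" and small: "pnorm p y \<le> r * pnorm p x"
      and tan: "y \<bullet> grad (pnorm p) x = 0" for x y :: "real^'n"
  proof -
    have "(\<Sum>i\<in>UNIV. abs_powr_bregman p (x $ i) (y $ i)) \<le> \<delta> * psum p x"
      using sum_abs_powr_bregman_le[OF p _ r small] tangent_pnorm_iff[OF p x] tan r_powr by simp
    from hfun_pnorm_double_ge[OF p x tan this] have
      "c * (1 + c * \<delta>) powr (1 / p - 1) * hfun (pnorm p) x (x + y) \<le> hfun (pnorm p) x (x + 2 *\<^sub>R y)"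
      by (simp add: c_def)
    moreover have "0 \<le> hfun (pnorm p) x (x + y)"
      using hfun_pnorm_tangent_nonneg[OF p x tan, of 1] by simp
    ultimately show ?thesis
      using \<delta>(2) by (meson mult_right_mono order_trans)
  qed
  moreover have "2 < L" using c by (simp add: L_def)
  ultimately show ?thesis
    unfolding geom_convex_tangent_def using r by (intro exI[of _ L]) (auto intro: exI[of _ r])
qed

theorem theorem6p7:
  fixes p :: real
  assumes "1 < p"
  shows "(\<forall>x::real^'n. x \<noteq> 0 \<longrightarrow> pnorm p differentiable (at x))
    \<and> geom_convex_tangent (pnorm p :: real^'n \<Rightarrow> real)
    \<and> doubling_tangent (pnorm p :: real^'n \<Rightarrow> real)
    \<and> balanced_tangent (pnorm p :: real^'n \<Rightarrow> real)"
  using has_derivative_pnorm[OF assms] geom_convex_tangent_pnorm[OF assms]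
    doubling_tangent_pnorm[OF assms] balanced_tangent_pnorm[OF assms]
  by (auto simp: differentiable_def)

end
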